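(* Let $\sigma\in\widehat W$ be such that $\mathrm{ran}(\mathrm{id}-\sigma)$ is an affine hyperplane of $V$, and let \[\xi\in V_\sigma\setminus\bigcup_{I\subsetneq\{0,\dots,l\},\ |I|\ge2}V_{\sigma,I}.\] Then there are two distinct indices $i,i'\in\{0,\dots,l\}$ with $\xi\in V_{\sigma,i}\cap V_{\sigma,i'}$. Furthermore $w=\sigma s_i$ and $w'=\sigma s_{i'}$ both lie in $\widehat W_{\mathrm{reg}}$, one has $V_{w,i}=V_{\sigma,i}$ and $V_{w',i'}=V_{\sigma,i'}$, and the open polytopes $V_w$ and $V_{w'}$ lie on opposite sides of the affine hyperplane $\mathrm{ran}(\mathrm{id}-\sigma)$.
   Context: $V$ is a finite-dimensional real Euclidean space, $W$ an irreducible Weyl group acting on $V$ with simple roots $\alpha_1,\dots,\alpha_l$, highest root $\alpha_{\max}$, $\alpha_0:=-\alpha_{\max}$, $\alpha^\vee=2\alpha/\langle\alpha,\alpha\rangle$. Alcove $A=\{x\mid\langle\alpha_i,x\rangle+\delta_{i,0}>0,\ i=0,\dots,l\}$; for a proper subset $I\subsetneq\{0,\dots,l\}$ the face $A_I$ is given by equalities $\langle\alpha_i,x\rangle+\delta_{i,0}=0$ for $i\in I$ and strict inequalities for $i\notin I$; $A_i=A_{\{i\}}$. $\widehat W$ is generated by $s_i(x)=x-(\langle\alpha_i,x\rangle+\delta_{i,0})\alpha_i^\vee$, $i=0,\dots,l$. For $w\in\widehat W$, $\tilde w(x)=w(x)-w(0)$, $V_w=(\mathrm{id}-w)(A)$,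 $V_{w,I}=(\mathrm{id}-w)(A_I)$, $V_{w,i}=V_{w,\{i\}}$, where $(\mathrm{id}-w)(x)=x-w(x)$. $\widehat W_{\mathrm{reg}}=\{w\mid\mathrm{id}-\tilde w\text{ invertible}\}$. *)

theory Defs
  imports "HOL-Analysis.Analysis"
begin

definition coroot :: "'a::euclidean_space \<Rightarrow> 'a" where
  "coroot a = (2 / (a \<bullet> a)) *\<^sub>R a"

definition reflect :: "'a::euclidean_space \<Rightarrow> 'a \<Rightarrow> 'a" where
  "reflect a x = x - (a \<bullet> x) *\<^sub>R coroot a"

definition root_system :: "'a::euclidean_space set \<Rightarrow> bool" where
  "root_system R \<longleftrightarrow> finite R \<and> 0 \<notin> R \<and> span R = UNIV
     \<and> (\<forall>a\<in>R. \<forall>b\<in>R. reflect a b \<in> R)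
     \<and> (\<forall>a\<in>R. \<forall>b\<in>R. 2 * (a \<bullet> b) / (a \<bullet> a) \<in> \<int>)
     \<and> (\<forall>a\<in>R. \<forall>c::real. c *\<^sub>R a \<in> R \<longrightarrow> c = 1 \<or> c = -1)"

definition irreducible_rs :: "'a::euclidean_space set \<Rightarrow> bool" where
  "irreducible_rs R \<longleftrightarrow> \<not> (\<exists>R1 R2. R1 \<noteq> {} \<and> R2 \<noteq> {} \<and> R1 \<union> R2 = R
      \<and> (\<forall>a\<in>R1. \<forall>b\<in>R2. a \<bullet> b = 0))"

definition simple_system :: "'a::euclidean_space set \<Rightarrow> nat \<Rightarrow> (nat \<Rightarrow> 'a) \<Rightarrow> bool" where
  "simple_system R l alpha \<longleftrightarrow> (\<forall>i\<in>{1..l}. alpha i \<in> R) \<and> inj_on alpha {1..l}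
     \<and> independent (alpha ` {1..l})
     \<and> (\<forall>b\<in>R. \<exists>c::nat \<Rightarrow> int. b = (\<Sum>i=1..l. of_int (c i) *\<^sub>R alpha i)
            \<and> ((\<forall>i\<in>{1..l}. c i \<ge> 0) \<or> (\<forall>i\<in>{1..l}. c i \<le> 0)))"

definition highest_root :: "'a::euclidean_space set \<Rightarrow> nat \<Rightarrow> (nat \<Rightarrow> 'a) \<Rightarrow> 'a \<Rightarrow> bool" where
  "highest_root R l alpha m \<longleftrightarrow> m \<in> R \<and>
     (\<forall>b\<in>R. \<exists>c::nat \<Rightarrow> nat. m - b = (\<Sum>i=1..l. of_nat (c i) *\<^sub>R alpha i))"

definition affine_weyl_setup :: "'a::euclidean_space set \<Rightarrow> nat \<Rightarrow> (nat \<Rightarrow> 'a) \<Rightarrow> bool" where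
  "affine_weyl_setup R l alpha \<longleftrightarrow> root_system R \<and> irreducible_rs R \<and> simple_system R l alpha
     \<and> highest_root R l alpha (- alpha 0)"

definition delta0 :: "nat \<Rightarrow> real" where
  "delta0 i = (if i = 0 then 1 else 0)"

definition aff_s :: "(nat \<Rightarrow> 'a::euclidean_space) \<Rightarrow> nat \<Rightarrow> 'a \<Rightarrow> 'a" where
  "aff_s alpha i x = x - (alpha i \<bullet> x + delta0 i) *\<^sub>R coroot (alpha i)"

text \<open>The group generated by s_0, ..., s_l (each s_i is an involution, so closure
  under right multiplication by generators starting from id gives the whole group).\<close>
inductive_set affW :: "nat \<Rightarrow> (nat \<Rightarrow> 'a::euclidean_space) \<Rightarrow> ('a \<Rightarrow> 'a) set"
  for l alpha where
  id_in: "id \<in> affW l alpha"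
| step: "w \<in> affW l alpha \<Longrightarrow> i \<le> l \<Longrightarrow> w \<circ> aff_s alpha i \<in> affW l alpha"

definition alcove :: "nat \<Rightarrow> (nat \<Rightarrow> 'a::euclidean_space) \<Rightarrow> 'a set" where
  "alcove l alpha = {x. \<forall>i\<le>l. alpha i \<bullet> x + delta0 i > 0}"

definition face :: "nat \<Rightarrow> (nat \<Rightarrow> 'a::euclidean_space) \<Rightarrow> nat set \<Rightarrow> 'a set" where
  "face l alpha I = {x. (\<forall>i\<in>I. alpha i \<bullet> x + delta0 i = 0)
       \<and> (\<forall>i\<in>{0..l} - I. alpha i \<bullet> x + delta0 i > 0)}"

definition id_minus :: "('a::real_vector \<Rightarrow> 'a) \<Rightarrow> 'a \<Rightarrow> 'a" where
  "id_minus w x = x - w x"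

definition lin_part :: "('a::real_vector \<Rightarrow> 'a) \<Rightarrow> 'a \<Rightarrow> 'a" where
  "lin_part w x = w x - w 0"

definition Vw :: "nat \<Rightarrow> (nat \<Rightarrow> 'a::euclidean_space) \<Rightarrow> ('a \<Rightarrow> 'a) \<Rightarrow> 'a set" where
  "Vw l alpha w = id_minus w ` alcove l alpha"

definition VwI :: "nat \<Rightarrow> (nat \<Rightarrow> 'a::euclidean_space) \<Rightarrow> ('a \<Rightarrow> 'a) \<Rightarrow> nat set \<Rightarrow> 'a set" where
  "VwI l alpha w I = id_minus w ` face l alpha I"

definition affW_reg :: "nat \<Rightarrow> (nat \<Rightarrow> 'a::euclidean_space) \<Rightarrow> ('a \<Rightarrow> 'a) set" where
  "affW_reg l alpha = {w \<in> affW l alpha. bij (id_minus (lin_part w))}"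

end

theory Submission
  imports Defs
begin

(* Proposition 3.3.  For sigma in the affine Weyl group write sigma x = g x + sigma 0 with
   g = lin_part sigma, an orthogonal map.  If ran(id - sigma) is the affine hyperplane a.x = b,
   then ran(id - g) is the linear hyperplane a^perp, and orthogonality forces the fixed vectors
   of g to be exactly the line through a; hence id - sigma is constant along the direction a.  From these, for a normal a of the hyperplane:
   - a generic xi lies on a facet V_{sigma,i} with alpha_i.a < 0 (move a preimage of xi in the
     alcove along a until it leaves the alcove; genericity allows only one wall),
   - alpha_k.a <> 0 makes sigma s_k regular, and alpha_k.a < 0 puts V_{sigma s_k} strictly
     below the hyperplane, since id - sigma s_k = (id - sigma) + (alpha_k.x + delta_k0) g(alpha_k^vee).
   Applying these to (a, b) and to (-a, -b) gives the indices i and i' of the proposition. *)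

definition refl_lin :: "'a::euclidean_space \<Rightarrow> 'a \<Rightarrow> 'a" where
  "refl_lin v x = x - (v \<bullet> x) *\<^sub>R coroot v"

lemma orthogonal_transformation_refl_lin: "orthogonal_transformation (refl_lin v)"
proof -
  have "linear (refl_lin v)"
    unfolding refl_lin_def by (rule linearI) (simp_all add: algebra_simps inner_add_right)
  moreover have "refl_lin v x \<bullet> refl_lin v y = x \<bullet> y" for x y
  proof (cases "v = 0")
    case False
    then show ?thesis
      by (simp add: refl_lin_def coroot_def inner_diff_left inner_diff_right algebra_simps inner_commute)
  qed (simp add: refl_lin_def coroot_def)
  ultimately show ?thesis by (simp add: orthogonal_transformation_def)
qed

lemma lin_part_aff_s: "lin_part (aff_s alpha i) = refl_lin (alpha i)"
  by (auto simp: lin_part_def aff_s_def refl_lin_def algebra_simps)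

lemma lin_part_translate: "w x = lin_part w x + w 0"
  by (simp add: lin_part_def)

lemma lin_part_compose:
  assumes "linear (lin_part w)"
  shows "lin_part (w \<circ> f) = lin_part w \<circ> lin_part f"
proof
  fix x
  have "lin_part (w \<circ> f) x = w (f x) - w (f 0)"
    by (simp add: lin_part_def)
  also have "\<dots> = lin_part w (f x) - lin_part w (f 0)"
    by (simp add: lin_part_def)
  also have "\<dots> = lin_part w (lin_part f x)"
    using assms by (simp add: lin_part_def[of f] linear_diff)
  finally show "lin_part (w \<circ> f) x = (lin_part w \<circ> lin_part f) x" by simp
qed

lemma affW_orthogonal_lin_part:
  assumes "w \<in> affW l alpha"
  shows "orthogonal_transformation (lin_part w)"
  using assms
proof induction
  case id_in
  show ?case by (simp add: lin_part_def[abs_def])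
next
  case (step w i)
  then have "lin_part (w \<circ> aff_s alpha i) = lin_part w \<circ> refl_lin (alpha i)"
    by (simp add: lin_part_compose orthogonal_transformation_linear lin_part_aff_s)
  then show ?case
    using step orthogonal_transformation_compose orthogonal_transformation_refl_lin by metis
qed

lemma id_minus_lin_part: "id_minus w x = x - lin_part w x - w 0"
  by (simp add: id_minus_def lin_part_def)

lemma linear_id_minus: "linear f \<Longrightarrow> linear (id_minus f)"
  unfolding id_minus_def by (intro linear_compose_sub linear_id[unfolded id_def])

lemma id_minus_translate_fixed:
  assumes "linear (lin_part w)" and "lin_part w d = d"
  shows "id_minus w (x + t *\<^sub>R d) = id_minus w x"
  using assms by (simp add: id_minus_lin_part linear_add linear_scale algebra_simps)

lemma id_minus_compose_aff_s:
  assumes "linear (lin_part w)"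
  shows "id_minus (w \<circ> aff_s alpha k) x
           = id_minus w x + (alpha k \<bullet> x + delta0 k) *\<^sub>R lin_part w (coroot (alpha k))"
proof -
  have "w (aff_s alpha k x) = lin_part w (aff_s alpha k x) + w 0"
    by (rule lin_part_translate)
  also have "\<dots> = lin_part w x + w 0 - (alpha k \<bullet> x + delta0 k) *\<^sub>R lin_part w (coroot (alpha k))"
    using assms by (simp add: aff_s_def linear_diff linear_scale)
  also have "\<dots> = w x - (alpha k \<bullet> x + delta0 k) *\<^sub>R lin_part w (coroot (alpha k))"
    by (simp add: lin_part_translate[of w x])
  finally show ?thesis by (simp add: id_minus_def)
qed

text \<open>Since s_k fixes the face A_k pointwise, V_{w s_k, k} = V_{w, k}.\<close>
lemma VwI_compose_aff_s:
  "VwI l alpha (w \<circ> aff_s alpha k) {k} = VwI l alpha w {k}"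
proof -
  have "id_minus (w \<circ> aff_s alpha k) x = id_minus w x" if "x \<in> face l alpha {k}" for x
    using that by (simp add: face_def aff_s_def id_minus_def)
  then show ?thesis unfolding VwI_def by (rule image_cong[OF refl])
qed

subsection \<open>Orthogonal maps whose displacement space is a hyperplane\<close>

lemma displacement_perp:
  assumes "range (id_minus g) = {z. a \<bullet> z = 0}"
  shows "a \<bullet> (y - g y) = 0"
  using assms unfolding id_minus_def by (metis (mono_tags, lifting) rangeI mem_Collect_eq)

text \<open>If ran(id - g) is the hyperplane orthogonal to a, the orthogonal map g fixes exactly the
  line spanned by a (fixed vectors are orthogonal to ran(id - g)).\<close>
lemma orthogonal_fixed_line:
  fixes g :: "'a::real_inner \<Rightarrow> 'a"
  assumes g: "orthogonal_transformation g" and a: "a \<noteq> 0"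
    and ran: "range (id_minus g) = {z. a \<bullet> z = 0}"
  shows "g v = v \<longleftrightarrow> v \<in> span {a}"
proof
  have orth: "g x \<bullet> g y = x \<bullet> y" for x y
    using g by (simp add: orthogonal_transformation_def)
  assume fixed: "g v = v"
  define c where "c = a \<bullet> v / (a \<bullet> a)"
  define z where "z = v - c *\<^sub>R a"
  have az: "a \<bullet> z = 0" using a by (simp add: z_def c_def inner_diff_right)
  then obtain y where y: "z = y - g y" using ran by (auto simp: id_minus_def)
  have "v \<bullet> z = 0"
    using fixed by (simp add: y inner_diff_right orth[of v y, symmetric])
  then have "z \<bullet> z = 0" using az by (simp add: z_def inner_diff_left)
  then have "v = c *\<^sub>R a" by (simp add: z_def)
  then show "v \<in> span {a}" by (simp add: span_base span_scale)
next
  have "a \<bullet> g a = a \<bullet> a"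
    using displacement_perp[OF ran, of a] by (simp add: inner_diff_right)
  then have "(g a - a) \<bullet> (g a - a) = 0"
    using g by (simp add: inner_diff_left inner_diff_right inner_commute
        orthogonal_transformation_def)
  then have "g a = a" by simp
  moreover assume "v \<in> span {a}"
  ultimately show "g v = v"
    using g by (auto simp: span_singleton orthogonal_transformation_scaleR)
qed

lemma bij_id_minus_compose_refl_lin:
  fixes g :: "'a::euclidean_space \<Rightarrow> 'a"
  assumes g: "orthogonal_transformation g" and a: "a \<noteq> 0"
    and ran: "range (id_minus g) = {z. a \<bullet> z = 0}"
    and transverse: "v \<bullet> a \<noteq> 0"
  shows "bij (id_minus (g \<circ> refl_lin v))"
proof -
  let ?h = "id_minus (g \<circ> refl_lin v)"
  have lin: "linear ?h"
    using g by (intro linear_id_minus orthogonal_transformation_linear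
        orthogonal_transformation_compose orthogonal_transformation_refl_lin)
  have "x = 0" if hx: "?h x = 0" for x
  proof -
    define u where "u = refl_lin v x"
    have xu: "x = g u" using hx by (simp add: id_minus_def u_def)
    have "u - g u = u - x" using xu by simp
    also have "\<dots> = - (v \<bullet> x) *\<^sub>R coroot v" by (simp add: u_def refl_lin_def)
    finally have "a \<bullet> (- (v \<bullet> x) *\<^sub>R coroot v) = 0"
      using displacement_perp[OF ran, of u] by simp
    then have "(v \<bullet> x) * (2 / (v \<bullet> v)) * (v \<bullet> a) = 0"
      by (simp add: coroot_def inner_commute)
    moreover have "v \<bullet> v \<noteq> 0" using transverse by auto
    ultimately have vx: "v \<bullet> x = 0" using transverse by simp
    then have "u = x" by (simp add: u_def refl_lin_def)
    then have "g x = x" using xu by simp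
    then obtain c where c: "x = c *\<^sub>R a"
      using orthogonal_fixed_line[OF g a ran] by (auto simp: span_singleton)
    then have "c = 0" using vx transverse by simp
    then show ?thesis using c by simp
  qed
  then have "inj ?h" using lin by (simp add: linear_injective_0)
  then show ?thesis using lin by (simp add: bij_def linear_injective_imp_surjective)
qed

subsection \<open>The walls alpha_0, ..., alpha_l\<close>

text \<open>No nonzero vector lies on the nonnegative side of all of alpha_0, ..., alpha_l: the
  highest root bounds each simple root, so such a vector is orthogonal to every root.\<close>
lemma affine_roots_nonneg_imp_zero:
  assumes std: "affine_weyl_setup R l alpha"
    and v: "\<forall>j\<le>l. alpha j \<bullet> v \<ge> 0"
  shows "v = (0::'a::euclidean_space)"
proof -
  have rs: "root_system R" and ss: "simple_system R l alpha"
    and hr: "highest_root R l alpha (- alpha 0)"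
    using std by (auto simp: affine_weyl_setup_def)
  have simple_perp: "alpha k \<bullet> v = 0" if k: "k \<in> {1..l}" for k
  proof -
    have "alpha k \<in> R" using ss k by (auto simp: simple_system_def)
    then obtain c :: "nat \<Rightarrow> nat"
      where c: "- alpha 0 - alpha k = (\<Sum>i=1..l. of_nat (c i) *\<^sub>R alpha i)"
      using hr by (auto simp: highest_root_def)
    have "(- alpha 0 - alpha k) \<bullet> v = (\<Sum>i=1..l. of_nat (c i) * (alpha i \<bullet> v))"
      unfolding c by (simp add: inner_sum_left)
    also have "\<dots> \<ge> 0" using v by (intro sum_nonneg) auto
    finally have "alpha k \<bullet> v \<le> - (alpha 0 \<bullet> v)" by (simp add: inner_diff_left)
    moreover have "alpha 0 \<bullet> v \<ge> 0" "alpha k \<bullet> v \<ge> 0" using v k by auto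
    ultimately show ?thesis by linarith
  qed
  have "orthogonal v r" if r: "r \<in> R" for r
  proof -
    obtain c :: "nat \<Rightarrow> int" where c: "r = (\<Sum>i=1..l. of_int (c i) *\<^sub>R alpha i)"
      using ss r by (auto simp: simple_system_def)
    have "r \<bullet> v = 0" unfolding c by (simp add: inner_sum_left simple_perp)
    then show ?thesis by (simp add: orthogonal_def inner_commute)
  qed
  moreover have "v \<in> span R" using rs by (simp add: root_system_def)
  ultimately have "orthogonal v v" using orthogonal_to_span by blast
  then show ?thesis by (simp add: orthogonal_def)
qed

lemma exists_negative_wall:
  assumes "affine_weyl_setup R l alpha" and "d \<noteq> (0::'a::euclidean_space)"
  shows "\<exists>j\<le>l. alpha j \<bullet> d < 0"
  using affine_roots_nonneg_imp_zero[OF assms(1)] assms(2) by (meson not_le)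

lemma exit_face:
  fixes alpha :: "nat \<Rightarrow> 'a::euclidean_space"
  assumes x0: "x0 \<in> alcove l alpha" and j1: "j1 \<le> l" "alpha j1 \<bullet> d < 0"
  shows "\<exists>J T. J \<subseteq> {0..l} \<and> J \<noteq> {} \<and> (\<forall>j\<in>J. alpha j \<bullet> d < 0)
           \<and> x0 + T *\<^sub>R d \<in> face l alpha J"
proof -
  define c where "c j = alpha j \<bullet> x0 + delta0 j" for j
  define e where "e j = alpha j \<bullet> d" for j
  define P where "P = {j. j \<le> l \<and> e j < 0}"
  define q where "q j = c j / (- e j)" for j
  have cpos: "\<And>j. j \<le> l \<Longrightarrow> c j > 0" using x0 by (auto simp: alcove_def c_def)
  have finP: "finite P" unfolding P_def by auto
  have neP: "P \<noteq> {}" using j1 by (auto simp: P_def e_def)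
  define T where "T = Min (q ` P)"
  have "T \<in> q ` P" unfolding T_def using finP neP by (intro Min_in) auto
  then obtain j0 where j0: "j0 \<in> P" "q j0 = T" by auto
  have Tle: "\<And>j. j \<in> P \<Longrightarrow> T \<le> q j" unfolding T_def using finP by auto
  define J where "J = {j \<in> P. q j = T}"
  have val: "alpha j \<bullet> (x0 + T *\<^sub>R d) + delta0 j = c j + T * e j" for j
    by (simp add: c_def e_def inner_add_right)
  have T0: "T > 0" using j0 cpos[of j0] by (auto simp: P_def q_def divide_pos_neg)
  have zero: "c j + T * e j = 0" if "j \<in> J" for j
  proof -
    have "e j < 0" "T = c j / (- e j)" using that by (auto simp: J_def P_def q_def)
    then show ?thesis by (simp add: field_simps)
  qed
  have pos: "c j + T * e j > 0" if "j \<le> l" "j \<notin> J" for j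
  proof (cases "e j < 0")
    case True
    then have "j \<in> P" using that by (simp add: P_def)
    then have "T < q j" using Tle that by (force simp: J_def)
    then show ?thesis using True by (simp add: q_def field_simps)
  next
    case False
    then have "T * e j \<ge> 0" using T0 by simp
    then show ?thesis using cpos[OF that(1)] by linarith
  qed
  show ?thesis
  proof (intro exI conjI)
    show "J \<subseteq> {0..l}" by (auto simp: J_def P_def)
    show "J \<noteq> {}" using j0 by (auto simp: J_def)
    show "\<forall>j\<in>J. alpha j \<bullet> d < 0" by (auto simp: J_def P_def e_def)
    show "x0 + T *\<^sub>R d \<in> face l alpha J"
      unfolding face_def using zero pos val by auto
  qed
qed

definition displacement_hyperplane :: "('a::euclidean_space \<Rightarrow> 'a) \<Rightarrow> 'a \<Rightarrow> real \<Rightarrow> bool" where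
  "displacement_hyperplane w a b \<longleftrightarrow> a \<noteq> 0 \<and> range (id_minus w) = {x. a \<bullet> x = b}"

text \<open>The same hyperplane described by the opposite normal; this lets every one-sided
  statement below be used for both sides.\<close>
lemma displacement_hyperplane_neg:
  "displacement_hyperplane w a b \<Longrightarrow> displacement_hyperplane w (- a) (- b)"
  by (simp add: displacement_hyperplane_def)

lemma displacement_hyperplane_lin_part:
  assumes "displacement_hyperplane w a b"
  shows "range (id_minus (lin_part w)) = {z. a \<bullet> z = 0}"
proof -
  have ran: "range (id_minus w) = {x. a \<bullet> x = b}"
    using assms by (simp add: displacement_hyperplane_def)
  have shift: "id_minus (lin_part w) x = id_minus w x + w 0" for x
    by (simp add: id_minus_def lin_part_def)
  have "a \<bullet> id_minus w 0 = b" using ran by blast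
  then have b: "b = - (a \<bullet> w 0)" by (simp add: id_minus_def)
  show ?thesis
  proof (intro equalityI subsetI)
    fix z assume "z \<in> range (id_minus (lin_part w))"
    then obtain x where "z = id_minus w x + w 0" by (auto simp: shift)
    moreover have "a \<bullet> id_minus w x = b" using ran by blast
    ultimately show "z \<in> {z. a \<bullet> z = 0}" by (simp add: b inner_add_right)
  next
    fix z assume "z \<in> {z. a \<bullet> z = 0}"
    then have "z - w 0 \<in> range (id_minus w)" using ran by (simp add: b inner_diff_right)
    then obtain x where "z - w 0 = id_minus w x" by auto
    then show "z \<in> range (id_minus (lin_part w))" by (metis shift diff_add_cancel rangeI)
  qed
qed

lemma displacement_hyperplane_fixed_line:
  assumes "w \<in> affW l alpha" and "displacement_hyperplane w a b"
  shows "lin_part w v = v \<longleftrightarrow> v \<in> span {a}"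
  using orthogonal_fixed_line[OF affW_orthogonal_lin_part[OF assms(1)] _
      displacement_hyperplane_lin_part[OF assms(2)]] assms(2)
  by (simp add: displacement_hyperplane_def)

lemma regular_compose_aff_s:
  assumes sigma: "\<sigma> \<in> affW l alpha" and hyp: "displacement_hyperplane \<sigma> a b"
    and k: "k \<le> l" and transverse: "alpha k \<bullet> a \<noteq> 0"
  shows "\<sigma> \<circ> aff_s alpha k \<in> affW_reg l alpha"
proof -
  have g: "orthogonal_transformation (lin_part \<sigma>)"
    using affW_orthogonal_lin_part[OF sigma] .
  have "lin_part (\<sigma> \<circ> aff_s alpha k) = lin_part \<sigma> \<circ> refl_lin (alpha k)"
    using g by (simp add: lin_part_compose orthogonal_transformation_linear lin_part_aff_s)
  moreover have "bij (id_minus (lin_part \<sigma> \<circ> refl_lin (alpha k)))"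
    using hyp transverse
    by (intro bij_id_minus_compose_refl_lin[OF g _ displacement_hyperplane_lin_part[OF hyp]])
       (auto simp: displacement_hyperplane_def)
  ultimately show ?thesis
    using affW.step[OF sigma k] by (simp add: affW_reg_def)
qed

text \<open>If alpha_k.a < 0, the polytope V_{sigma s_k} lies strictly below the hyperplane: the
  displacement grows by a positive multiple of g(alpha_k^vee), and a.g(v) = a.v.\<close>
lemma Vw_compose_aff_s_below:
  assumes sigma: "\<sigma> \<in> affW l alpha" and hyp: "displacement_hyperplane \<sigma> a b"
    and k: "k \<le> l" and neg: "alpha k \<bullet> a < 0"
  shows "Vw l alpha (\<sigma> \<circ> aff_s alpha k) \<subseteq> {x. a \<bullet> x < b}"
proof
  let ?g = "lin_part \<sigma>"
  have g: "orthogonal_transformation ?g" using affW_orthogonal_lin_part[OF sigma] .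
  have "?g a = a" using displacement_hyperplane_fixed_line[OF sigma hyp] by (simp add: span_base)
  then have a_g: "a \<bullet> ?g v = a \<bullet> v" for v
    using g by (metis orthogonal_transformation_def)
  have "alpha k \<bullet> alpha k > 0" using neg by (metis inner_zero_left inner_gt_zero_iff less_irrefl)
  then have a_coroot: "a \<bullet> coroot (alpha k) < 0"
    using neg by (simp add: coroot_def inner_commute divide_neg_pos)
  fix y assume "y \<in> Vw l alpha (\<sigma> \<circ> aff_s alpha k)"
  then obtain x where x: "x \<in> alcove l alpha" and y: "y = id_minus (\<sigma> \<circ> aff_s alpha k) x"
    by (auto simp: Vw_def)
  have wall: "alpha k \<bullet> x + delta0 k > 0" using x k by (simp add: alcove_def)
  have "a \<bullet> id_minus \<sigma> x = b"
    using hyp by (auto simp: displacement_hyperplane_def)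
  then have "a \<bullet> y = b + (alpha k \<bullet> x + delta0 k) * (a \<bullet> coroot (alpha k))"
    using y g by (simp add: id_minus_compose_aff_s orthogonal_transformation_linear
        inner_add_right a_g)
  also have "\<dots> < b" using wall a_coroot by (simp add: mult_pos_neg)
  finally show "y \<in> {x. a \<bullet> x < b}" by simp
qed

text \<open>Move a preimage of xi in the alcove along a, which
  is fixed by the linear part, until it hits the boundary.\<close>
lemma generic_point_on_facet:
  assumes std: "affine_weyl_setup R l alpha"
    and sigma: "\<sigma> \<in> affW l alpha" and hyp: "displacement_hyperplane \<sigma> a b"
    and xi: "\<xi> \<in> Vw l alpha \<sigma>"
    and xi_gen: "\<forall>I. I \<subset> {0..l} \<and> card I \<ge> 2 \<longrightarrow> \<xi> \<notin> VwI l alpha \<sigma> I"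
  shows "\<exists>i\<le>l. alpha i \<bullet> a < 0 \<and> \<xi> \<in> VwI l alpha \<sigma> {i}"
proof -
  have a: "a \<noteq> 0" using hyp by (simp add: displacement_hyperplane_def)
  have lin: "linear (lin_part \<sigma>)"
    using affW_orthogonal_lin_part[OF sigma] by (rule orthogonal_transformation_linear)
  have fixed: "lin_part \<sigma> a = a"
    using displacement_hyperplane_fixed_line[OF sigma hyp] by (simp add: span_base)
  obtain x0 where x0: "x0 \<in> alcove l alpha" and xi0: "\<xi> = id_minus \<sigma> x0"
    using xi by (auto simp: Vw_def)
  obtain j1 where j1: "j1 \<le> l" "alpha j1 \<bullet> a < 0"
    using exists_negative_wall[OF std a] by blast
  obtain j2 where j2: "j2 \<le> l" "alpha j2 \<bullet> (- a) < 0"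
    using exists_negative_wall[OF std] a by (metis neg_equal_0_iff_equal)
  obtain J T where J: "J \<subseteq> {0..l}" "J \<noteq> {}" "\<forall>j\<in>J. alpha j \<bullet> a < 0"
    and face: "x0 + T *\<^sub>R a \<in> face l alpha J"
    using exit_face[OF x0 j1] by blast
  have "id_minus \<sigma> (x0 + T *\<^sub>R a) = \<xi>"
    using id_minus_translate_fixed[OF lin fixed] xi0 by simp
  then have xiJ: "\<xi> \<in> VwI l alpha \<sigma> J" using face unfolding VwI_def by (metis image_eqI)
  have "j2 \<notin> J" using J j2 by auto
  then have "J \<subset> {0..l}" using J j2 by auto
  then have "\<not> card J \<ge> 2" using xi_gen xiJ by blast
  moreover have "card J > 0" using J finite_subset by (auto simp: card_gt_0_iff)
  ultimately obtain i where "J = {i}" by (metis One_nat_def card_1_singletonE less_2_cases not_le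
        less_nat_zero_code)
  then show ?thesis using J xiJ by auto
qed

theorem proposition3p3:
  fixes R :: "'a::euclidean_space set" and l :: nat and alpha :: "nat \<Rightarrow> 'a"
    and \<sigma> :: "'a \<Rightarrow> 'a" and \<xi> :: 'a and a :: 'a and b :: real
  assumes std: "affine_weyl_setup R l alpha"
    and sigma: "\<sigma> \<in> affW l alpha"
    and hyp: "a \<noteq> 0" "range (id_minus \<sigma>) = {x. a \<bullet> x = b}"
    and xi: "\<xi> \<in> Vw l alpha \<sigma>"
    and xi_gen: "\<forall>I. I \<subset> {0..l} \<and> card I \<ge> 2 \<longrightarrow> \<xi> \<notin> VwI l alpha \<sigma> I"
  shows "\<exists>i i'. i \<le> l \<and> i' \<le> l \<and> i \<noteq> i'
     \<and> \<xi> \<in> VwI l alpha \<sigma> {i} \<inter> VwI l alpha \<sigma> {i'}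
     \<and> \<sigma> \<circ> aff_s alpha i \<in> affW_reg l alpha
     \<and> \<sigma> \<circ> aff_s alpha i' \<in> affW_reg l alpha
     \<and> VwI l alpha (\<sigma> \<circ> aff_s alpha i) {i} = VwI l alpha \<sigma> {i}
     \<and> VwI l alpha (\<sigma> \<circ> aff_s alpha i') {i'} = VwI l alpha \<sigma> {i'}
     \<and> ((Vw l alpha (\<sigma> \<circ> aff_s alpha i) \<subseteq> {x. a \<bullet> x < b}
          \<and> Vw l alpha (\<sigma> \<circ> aff_s alpha i') \<subseteq> {x. a \<bullet> x > b})
      \<or> (Vw l alpha (\<sigma> \<circ> aff_s alpha i) \<subseteq> {x. a \<bullet> x > b}
          \<and> Vw l alpha (\<sigma> \<circ> aff_s alpha i') \<subseteq> {x. a \<bullet> x < b}))"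
proof -
  have H: "displacement_hyperplane \<sigma> a b" using hyp by (simp add: displacement_hyperplane_def)
  obtain i where i: "i \<le> l" "alpha i \<bullet> a < 0" "\<xi> \<in> VwI l alpha \<sigma> {i}"
    using generic_point_on_facet[OF std sigma H xi xi_gen] by blast
  obtain i' where i': "i' \<le> l" "alpha i' \<bullet> (- a) < 0" "\<xi> \<in> VwI l alpha \<sigma> {i'}"
    using generic_point_on_facet[OF std sigma displacement_hyperplane_neg[OF H] xi xi_gen] by blast
  have below: "Vw l alpha (\<sigma> \<circ> aff_s alpha i) \<subseteq> {x. a \<bullet> x < b}"
    using Vw_compose_aff_s_below[OF sigma H i(1,2)] .
  have above: "Vw l alpha (\<sigma> \<circ> aff_s alpha i') \<subseteq> {x. a \<bullet> x > b}"
    using Vw_compose_aff_s_below[OF sigma displacement_hyperplane_neg[OF H] i'(1,2)] by simp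
  show ?thesis
  proof (intro exI conjI)
    show "i \<noteq> i'" using i(2) i'(2) by auto
    show "\<sigma> \<circ> aff_s alpha i \<in> affW_reg l alpha"
      using regular_compose_aff_s[OF sigma H i(1)] i(2) by simp
    show "\<sigma> \<circ> aff_s alpha i' \<in> affW_reg l alpha"
      using regular_compose_aff_s[OF sigma H i'(1)] i'(2) by simp
  qed (use i i' below above in \<open>auto simp: VwI_compose_aff_s\<close>)
qed

end
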